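(* Let $m\le n$. Then every instance with $n$ agents with monotone valuations and $m$ goods has at least $\frac{n!}{(n-m)!}$ EFX allocations, and there exists an instance with $n$ agents with additive valuations and $m$ goods that has exactly $\frac{n!}{(n-m)!}$ EFX allocations. *)

theory Defs
  imports "HOL-Library.FuncSet" Complex_Main
begin

text \<open>An (complete) allocation is a map from goods
to agents, extensional outside the goods.\<close>

definition allocations :: "nat \<Rightarrow> nat \<Rightarrow> (nat \<Rightarrow> nat) set" where
  "allocations n m = PiE {0..<m} (\<lambda>_. {0..<n})"

definition bundle_of :: "nat \<Rightarrow> (nat \<Rightarrow> nat) \<Rightarrow> nat \<Rightarrow> nat set" where
  "bundle_of m a i = {g \<in> {0..<m}. a g = i}"

definition monotone_valuations :: "nat \<Rightarrow> nat \<Rightarrow> (nat \<Rightarrow> nat set \<Rightarrow> real) \<Rightarrow> bool" where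
  "monotone_valuations n m v \<longleftrightarrow>
     (\<forall>i<n. \<forall>S T. S \<subseteq> T \<and> T \<subseteq> {0..<m} \<longrightarrow> v i S \<le> v i T)
   \<and> (\<forall>i<n. \<forall>S \<subseteq> {0..<m}. 0 \<le> v i S)"

definition additive_valuations :: "nat \<Rightarrow> nat \<Rightarrow> (nat \<Rightarrow> nat set \<Rightarrow> real) \<Rightarrow> bool" where
  "additive_valuations n m v \<longleftrightarrow>
     (\<exists>w :: nat \<Rightarrow> nat \<Rightarrow> real.
        (\<forall>i<n. \<forall>g<m. 0 \<le> w i g) \<and>
        (\<forall>i<n. \<forall>S \<subseteq> {0..<m}. v i S = (\<Sum>g\<in>S. w i g)))"

definition is_EFX :: "nat \<Rightarrow> nat \<Rightarrow> (nat \<Rightarrow> nat set \<Rightarrow> real) \<Rightarrow> (nat \<Rightarrow> nat) \<Rightarrow> bool" where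
  "is_EFX n m v a \<longleftrightarrow>
     (\<forall>i<n. \<forall>j<n. \<forall>g \<in> bundle_of m a j.
        v i (bundle_of m a i) \<ge> v i (bundle_of m a j - {g}))"

definition EFX_allocations :: "nat \<Rightarrow> nat \<Rightarrow> (nat \<Rightarrow> nat set \<Rightarrow> real) \<Rightarrow> (nat \<Rightarrow> nat) set" where
  "EFX_allocations n m v = {a \<in> allocations n m. is_EFX n m v a}"

end

theory Submission
  imports Defs
begin

text \<open>If every agent receives at most one good, removing any good from any bundle leaves the
empty bundle, which no agent values above her own; so every injective allocation is EFX for
monotone valuations, and there are n!/(n-m)! of them. Conversely, when every agent values a
bundle by its size, a non-injective allocation gives some agent two goods while (as m \<le> n)
another agent gets nothing, and the latter envies the former even after one good is removed.\<close>

lemma card_inj_on_PiE: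
  assumes "finite A" "finite B"
  shows "card {f \<in> A \<rightarrow>\<^sub>E B. inj_on f A} = (\<Prod>i = 0..<card A. card B - i)"
  using card_inj_on_subset_funcset[OF assms order_refl] by simp

lemma falling_factorial_eq_fact_div:
  assumes "m \<le> n"
  shows "real (\<Prod>i = 0..<m. n - i) = fact n / fact (n - m)"
proof -
  have "real (\<Prod>i = 0..<m. n - i) = (\<Prod>i = 0..<m. real n - real i)"
    using assms by (simp add: of_nat_diff)
  also have "\<dots> = fact m * (real n gchoose m)"
    by (rule gbinomial_mult_fact [symmetric])
  also have "\<dots> = fact n / fact (n - m)"
    using assms by (simp add: binomial_gbinomial [symmetric] binomial_fact)
  finally show ?thesis .
qed

definition injective_allocations :: "nat \<Rightarrow> nat \<Rightarrow> (nat \<Rightarrow> nat) set" where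
  "injective_allocations n m = {a \<in> allocations n m. inj_on a {0..<m}}"

lemma card_injective_allocations:
  assumes "m \<le> n"
  shows "real (card (injective_allocations n m)) = fact n / fact (n - m)"
  using card_inj_on_PiE[of "{0..<m}" "{0..<n}"] falling_factorial_eq_fact_div[OF assms]
  by (simp add: injective_allocations_def allocations_def)

lemma finite_EFX_allocations: "finite (EFX_allocations n m v)"
  unfolding EFX_allocations_def allocations_def
  by (rule finite_subset[OF _ finite_PiE[of "{0..<m}" "\<lambda>_. {0..<n}"]]) auto

lemma bundle_of_inj_on_remove:
  assumes "inj_on a {0..<m}" "g \<in> bundle_of m a j"
  shows "bundle_of m a j - {g} = {}"
  using assms unfolding bundle_of_def inj_on_def by auto

lemma injective_allocations_subset_EFX:
  assumes "monotone_valuations n m v"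
  shows "injective_allocations n m \<subseteq> EFX_allocations n m v"
proof
  fix a assume a: "a \<in> injective_allocations n m"
  have "v i (bundle_of m a j - {g}) \<le> v i (bundle_of m a i)"
    if "i < n" "g \<in> bundle_of m a j" for i j g
  proof -
    have "bundle_of m a j - {g} = {}"
      using a that(2) bundle_of_inj_on_remove by (auto simp: injective_allocations_def)
    moreover have "bundle_of m a i \<subseteq> {0..<m}"
      by (auto simp: bundle_of_def)
    ultimately show ?thesis
      using assms \<open>i < n\<close> unfolding monotone_valuations_def by (metis empty_subsetI)
  qed
  with a show "a \<in> EFX_allocations n m v"
    by (auto simp: injective_allocations_def EFX_allocations_def is_EFX_def)
qed

lemma empty_bundle_if_not_inj_on:
  assumes "a \<in> allocations n m" "m \<le> n" "\<not> inj_on a {0..<m}"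
  obtains i where "i < n" "bundle_of m a i = {}"
proof -
  have "card (a ` {0..<m}) < n"
    using assms(2,3) card_image_le[of "{0..<m}" a] inj_on_iff_eq_card[of "{0..<m}" a] by simp
  then have "\<not> {0..<n} \<subseteq> a ` {0..<m}"
    using card_mono[of "a ` {0..<m}" "{0..<n}"] by auto
  then obtain i where "i < n" "i \<notin> a ` {0..<m}"
    by (meson atLeastLessThan_iff subsetI zero_le)
  then show ?thesis
    using that by (force simp: bundle_of_def)
qed

lemma EFX_card_valuation_subset_injective:
  assumes "m \<le> n"
  shows "EFX_allocations n m (\<lambda>i S. real (card S)) \<subseteq> injective_allocations n m"
proof
  fix a assume "a \<in> EFX_allocations n m (\<lambda>i S. real (card S))"
  then have a: "a \<in> allocations n m" and EFX: "is_EFX n m (\<lambda>i S. real (card S)) a"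
    by (auto simp: EFX_allocations_def)
  have "inj_on a {0..<m}"
  proof (rule ccontr)
    assume not_inj: "\<not> inj_on a {0..<m}"
    then obtain g1 g2 where g: "g1 < m" "g2 < m" "g1 \<noteq> g2" "a g1 = a g2"
      unfolding inj_on_def by auto
    obtain i where "i < n" and empty: "bundle_of m a i = {}"
      using empty_bundle_if_not_inj_on[OF a assms not_inj] .
    have "a g1 < n"
      using a g(1) by (auto simp: allocations_def)
    moreover have "g1 \<in> bundle_of m a (a g1)"
      using g by (simp add: bundle_of_def)
    ultimately have "card (bundle_of m a (a g1) - {g1}) = 0"
      using EFX \<open>i < n\<close> empty unfolding is_EFX_def by fastforce
    moreover have "g2 \<in> bundle_of m a (a g1) - {g1}"
      using g by (simp add: bundle_of_def)
    ultimately show False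
      by (auto simp: bundle_of_def card_eq_0_iff)
  qed
  with a show "a \<in> injective_allocations n m"
    by (simp add: injective_allocations_def)
qed

lemma additive_card_valuations: "additive_valuations n m (\<lambda>i S. real (card S))"
  unfolding additive_valuations_def
  by (rule exI[of _ "\<lambda>i g. 1"]) (auto dest: finite_subset)

lemma monotone_card_valuations: "monotone_valuations n m (\<lambda>i S. real (card S))"
  unfolding monotone_valuations_def by (auto intro: card_mono dest: finite_subset)

theorem proposition3:
  fixes n m :: nat
  assumes "m \<le> n"
  shows "(\<forall>v. monotone_valuations n m v \<longrightarrow>
            real (card (EFX_allocations n m v)) \<ge> fact n / fact (n - m))
       \<and> (\<exists>v. additive_valuations n m v \<and>
            real (card (EFX_allocations n m v)) = fact n / fact (n - m))"
proof (intro conjI allI impI)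
  fix v assume "monotone_valuations n m v"
  then have "card (injective_allocations n m) \<le> card (EFX_allocations n m v)"
    by (intro card_mono[OF finite_EFX_allocations] injective_allocations_subset_EFX)
  then show "real (card (EFX_allocations n m v)) \<ge> fact n / fact (n - m)"
    using card_injective_allocations[OF assms] by linarith
next
  let ?v = "\<lambda>(i::nat) (S::nat set). real (card S)"
  have "EFX_allocations n m ?v = injective_allocations n m"
    using EFX_card_valuation_subset_injective[OF assms]
      injective_allocations_subset_EFX[OF monotone_card_valuations] by blast
  then show "\<exists>v. additive_valuations n m v \<and>
            real (card (EFX_allocations n m v)) = fact n / fact (n - m)"
    using additive_card_valuations card_injective_allocations[OF assms] by metis
qed

end
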